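(* Let $S$ be a connected shape in the triangular grid $G$ and let $h$ be a hole point of $S$. Then there exist points $v_1, v_2 \in S$ such that $h$ lies on a shortest path (in $G$) between $v_1$ and $v_2$.
   Context: The triangular grid $G$ is the infinite graph whose vertices ("points") are the points of the regular triangular lattice in the plane, two points being adjacent iff they are at unit distance; every point has exactly six neighbors. A shape is a finite set of points of $G$, identified with the subgraph of $G$ it induces. A connected shape $S$ partitions the plane into faces (regions bounded by its points and edges), exactly one of which is unbounded (the outer face). A bounded face containing at least one grid point not in $S$ is a hole of $S$; the grid points lying in holes of $S$ are called hole points of $S$. *)

theory Defs
  imports "HOL-Analysis.Analysis"
begin

text \<open>Points of the triangular grid in axial coordinates: the pair (a,b) denotes
  the plane point a + b*omega with omega = exp(i*pi/3).\<close>

type_synonym gpoint = "int \<times> int"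

definition omega :: complex where
  "omega = Complex (1/2) (sqrt 3 / 2)"

definition emb :: "gpoint \<Rightarrow> complex" where
  "emb p = of_int (fst p) + of_int (snd p) * omega"

definition gadj :: "gpoint \<Rightarrow> gpoint \<Rightarrow> bool" where
  "gadj p q \<longleftrightarrow> (fst q - fst p, snd q - snd p) \<in>
     {(1,0), (-1,0), (0,1), (0,-1), (1,-1), (-1,1)}"

definition gwalk :: "gpoint list \<Rightarrow> bool" where
  "gwalk ps \<longleftrightarrow> ps \<noteq> [] \<and> successively gadj ps"

definition gdist :: "gpoint \<Rightarrow> gpoint \<Rightarrow> nat" where
  "gdist u v = (LEAST n. \<exists>ps. gwalk ps \<and> hd ps = u \<and> last ps = v \<and> length ps = n + 1)"

definition shortest_path :: "gpoint list \<Rightarrow> gpoint \<Rightarrow> gpoint \<Rightarrow> bool" where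
  "shortest_path ps u v \<longleftrightarrow>
     gwalk ps \<and> hd ps = u \<and> last ps = v \<and> length ps = gdist u v + 1"

definition connected_shape :: "gpoint set \<Rightarrow> bool" where
  "connected_shape S \<longleftrightarrow> finite S \<and> S \<noteq> {} \<and>
     (\<forall>p\<in>S. \<forall>q\<in>S. \<exists>ps. gwalk ps \<and> set ps \<subseteq> S \<and> hd ps = p \<and> last ps = q)"

definition drawing :: "gpoint set \<Rightarrow> complex set" where
  "drawing S = emb ` S \<union>
     \<Union>{closed_segment (emb p) (emb q) | p q. p \<in> S \<and> q \<in> S \<and> gadj p q}"

text \<open>Hole point: a grid point not in S lying in a bounded face, i.e. in a bounded
  connected component of the complement of the drawing.\<close>
definition hole_point :: "gpoint set \<Rightarrow> gpoint \<Rightarrow> bool" where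
  "hole_point S h \<longleftrightarrow> h \<notin> S \<and> emb h \<notin> drawing S \<and>
     bounded (connected_component_set (- drawing S) (emb h))"

end

theory Submission
  imports Defs
begin

(* The horizontal grid line through a hole point h meets S on both sides of h: otherwise the
   ray from h in that direction avoids the drawing of S, hence lies in the face of h, which
   would then be unbounded. The horizontal segment between these two points of S is a shortest
   path, since every edge of G changes the first axial coordinate by at most one. *)

lemma successively_upto: "successively (\<lambda>x y. y = x + 1) [i..j]"
  by (auto simp: successively_conv_nth)

lemma gwalk_row: "i \<le> j \<Longrightarrow> gwalk (map (\<lambda>x. (x, y)) [i..j])"
  unfolding gwalk_def successively_map
  using successively_mono[OF successively_upto] by (auto simp: gadj_def)

lemma gadj_fst_diff: "gadj p q \<Longrightarrow> \<bar>fst q - fst p\<bar> \<le> 1"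
  unfolding gadj_def by auto

lemma gwalk_fst_diff:
  assumes "gwalk ps"
  shows "\<bar>fst (last ps) - fst (hd ps)\<bar> \<le> int (length ps) - 1"
  using assms unfolding gwalk_def
proof (induction ps rule: induct_list012)
  case (3 x y xs)
  then have "\<bar>fst (last (y # xs)) - fst y\<bar> \<le> int (length (y # xs)) - 1"
    by simp
  moreover have "\<bar>fst y - fst x\<bar> \<le> 1" using 3 gadj_fst_diff by simp
  ultimately show ?case by simp
qed auto

lemma hd_last_row:
  assumes "i \<le> j"
  shows "hd (map (\<lambda>x. (x, y)) [i..j]) = (i, y)"
    and "last (map (\<lambda>x. (x, y)) [i..j]) = (j, y)"
  by (subst upto_rec1[OF assms], simp) (subst upto_rec2[OF assms], simp)

lemma gdist_row:
  assumes "i \<le> j"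
  shows "gdist (i, y) (j, y) = nat (j - i)"
  unfolding gdist_def
proof (rule Least_equality)
  show "\<exists>ps. gwalk ps \<and> hd ps = (i, y) \<and> last ps = (j, y) \<and> length ps = nat (j - i) + 1"
    using gwalk_row[OF assms] hd_last_row[OF assms] assms
    by (intro exI[of _ "map (\<lambda>x. (x, y)) [i..j]"]) auto
next
  fix n assume "\<exists>ps. gwalk ps \<and> hd ps = (i, y) \<and> last ps = (j, y) \<and> length ps = n + 1"
  then obtain ps where "gwalk ps" "hd ps = (i, y)" "last ps = (j, y)" "length ps = n + 1"
    by blast
  then show "nat (j - i) \<le> n"
    using gwalk_fst_diff[of ps] by simp
qed

lemma shortest_path_row:
  assumes "i \<le> j"
  shows "shortest_path (map (\<lambda>x. (x, y)) [i..j]) (i, y) (j, y)"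
  using assms by (simp add: shortest_path_def gwalk_row hd_last_row gdist_row)

lemma Re_emb [simp]: "Re (emb p) = of_int (fst p) + of_int (snd p) / 2"
  by (simp add: emb_def omega_def)

lemma Im_emb [simp]: "Im (emb p) = of_int (snd p) * (sqrt 3 / 2)"
  by (simp add: emb_def omega_def)

lemma convex_combination_between:
  fixes a b u :: "'a :: linordered_idom"
  assumes "0 \<le> u" "u \<le> 1"
  defines "c \<equiv> (1 - u) * a + u * b"
  shows "a \<le> c \<and> c \<le> b \<or> b \<le> c \<and> c \<le> a"
  using assms mult_left_mono[of a b u] mult_left_mono[of a b "1 - u"]
    mult_left_mono[of b a u] mult_left_mono[of b a "1 - u"]
  by (cases "a \<le> b") (simp_all add: algebra_simps)

lemma drawing_row_span:
  assumes "z \<in> drawing S" and "Im z = Im (emb h)"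
  shows "\<exists>p\<in>S. \<exists>q\<in>S. snd p = snd h \<and> snd q = snd h \<and> Re (emb p) \<le> Re z \<and> Re z \<le> Re (emb q)"
proof -
  have vertex: ?thesis if "p \<in> S" "z = emb p" for p
    using that assms(2) by force
  consider "z \<in> emb ` S"
    | p q where "p \<in> S" "q \<in> S" "gadj p q" "z \<in> closed_segment (emb p) (emb q)"
    using assms(1) unfolding drawing_def by blast
  then show ?thesis
  proof cases
    case 1
    then show ?thesis using vertex by blast
  next
    case 2
    then obtain u where u: "0 \<le> u" "u \<le> 1" "z = (1 - u) *\<^sub>R emb p + u *\<^sub>R emb q"
      unfolding closed_segment_def by blast
    have row: "(1 - u) * of_int (snd p) + u * of_int (snd q) = real_of_int (snd h)"
    proof -
      have "Im z = (1 - u) * Im (emb p) + u * Im (emb q)"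
        using u(3) by simp
      then have "((1 - u) * of_int (snd p) + u * of_int (snd q)) * (sqrt 3 / 2) = Im z"
        by (simp only: Im_emb distrib_right mult.assoc)
      then show ?thesis using assms(2) by simp
    qed
    show ?thesis
    proof (cases "snd q = snd p")
      case True
      then have rows: "snd p = snd h" "snd q = snd h"
        using row by (simp_all add: algebra_simps)
      have "Re z = (1 - u) * Re (emb p) + u * Re (emb q)"
        using u(3) by simp
      then show ?thesis
        using convex_combination_between[OF u(1,2), of "Re (emb p)" "Re (emb q)"] 2 rows
        by (simp only:) blast
    next
      case False
      then have "snd q - snd p = 1 \<or> snd q - snd p = -1"
        using \<open>gadj p q\<close> unfolding gadj_def by auto
      \<comment> \<open>the segment leaves row \<open>snd p\<close>, so it can meet row \<open>snd h\<close> only at an endpoint\<close>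
      moreover have "u * of_int (snd q - snd p) = of_int (snd h - snd p)"
        using row by (simp add: algebra_simps)
      ultimately obtain k :: int where k: "u = of_int k"
        by (metis mult.right_neutral mult_minus_right minus_minus of_int_1 of_int_minus)
      then have "k = 0 \<or> k = 1"
        using u(1,2) by linarith
      then have "u = 0 \<or> u = 1"
        using k by auto
      then show ?thesis
        using vertex 2 u(3) by auto
    qed
  qed
qed

lemma hole_point_ray_meets_drawing:
  assumes "hole_point S h" and "d \<noteq> 0"
  shows "\<exists>t\<ge>0. emb h + of_real t * d \<in> drawing S"
proof (rule ccontr)
  define ray where "ray = (\<lambda>t. emb h + of_real t * d) ` {0..}"
  assume "\<not> ?thesis"
  then have "ray \<subseteq> - drawing S"
    unfolding ray_def by auto
  moreover have "connected ray"
    unfolding ray_def by (intro connected_continuous_image continuous_intros) simp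
  moreover have "emb h \<in> ray"
    unfolding ray_def by (rule image_eqI[of _ _ 0]) auto
  ultimately have "ray \<subseteq> connected_component_set (- drawing S) (emb h)"
    by (intro connected_component_maximal)
  then have "bounded ray"
    using assms(1) bounded_subset unfolding hole_point_def by blast
  then obtain B where B: "\<And>z. z \<in> ray \<Longrightarrow> norm z \<le> B"
    unfolding bounded_iff by blast
  define t where "t = (B + norm (emb h) + 1) / norm d"
  have "B + norm (emb h) + 1 > 0"
    using B[OF \<open>emb h \<in> ray\<close>] norm_ge_zero[of "emb h"] by linarith
  then have "t \<ge> 0"
    unfolding t_def by simp
  then have "norm (emb h + of_real t * d) \<le> B"
    by (intro B) (auto simp: ray_def)
  moreover have "norm (of_real t * d) = B + norm (emb h) + 1"
  proof -
    have "norm (of_real t * d) = t * norm d"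
      using \<open>t \<ge> 0\<close> by (simp add: norm_mult)
    also have "\<dots> = B + norm (emb h) + 1"
      using assms(2) unfolding t_def by simp
    finally show ?thesis .
  qed
  ultimately show False
    using norm_triangle_ineq4[of "emb h + of_real t * d" "emb h"] by simp
qed

lemma hole_point_row_neighbours:
  assumes "hole_point S h"
  shows "\<exists>p\<in>S. snd p = snd h \<and> fst p < fst h"
    and "\<exists>q\<in>S. snd q = snd h \<and> fst h < fst q"
proof -
  have "h \<notin> S"
    using assms unfolding hole_point_def by blast
  obtain t where "t \<ge> 0" and t: "emb h + of_real t * (-1) \<in> drawing S"
    using hole_point_ray_meets_drawing[OF assms, of "-1"] by auto
  then obtain p where p: "p \<in> S" "snd p = snd h" "Re (emb p) \<le> Re (emb h) - t"
    using drawing_row_span[OF t] by auto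
  moreover have "p \<noteq> h"
    using p(1) \<open>h \<notin> S\<close> by blast
  ultimately show "\<exists>p\<in>S. snd p = snd h \<and> fst p < fst h"
    using \<open>t \<ge> 0\<close> by (auto simp: prod_eq_iff)
  obtain t where "t \<ge> 0" and t: "emb h + of_real t * 1 \<in> drawing S"
    using hole_point_ray_meets_drawing[OF assms, of 1] by auto
  then obtain q where q: "q \<in> S" "snd q = snd h" "Re (emb h) + t \<le> Re (emb q)"
    using drawing_row_span[OF t] by auto
  moreover have "q \<noteq> h"
    using q(1) \<open>h \<notin> S\<close> by blast
  ultimately show "\<exists>q\<in>S. snd q = snd h \<and> fst h < fst q"
    using \<open>t \<ge> 0\<close> by (auto simp: prod_eq_iff)
qed

theorem proposition2p1:
  assumes "connected_shape S"
    and "hole_point S h"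
  shows "\<exists>v1\<in>S. \<exists>v2\<in>S. \<exists>ps. shortest_path ps v1 v2 \<and> h \<in> set ps"
proof -
  obtain p q where p: "p \<in> S" "snd p = snd h" "fst p < fst h"
    and q: "q \<in> S" "snd q = snd h" "fst h < fst q"
    using hole_point_row_neighbours[OF assms(2)] by blast
  let ?ps = "map (\<lambda>x. (x, snd h)) [fst p..fst q]"
  have "shortest_path ?ps (fst p, snd h) (fst q, snd h)"
    using p q by (intro shortest_path_row) simp
  then have "shortest_path ?ps p q"
    using p(2) q(2) by (metis prod.collapse)
  moreover have "h \<in> set ?ps"
    using p q by (simp add: image_iff) (metis atLeastAtMost_iff less_le prod.collapse)
  ultimately show ?thesis
    using p(1) q(1) by blast
qed

end
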